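(* Let $X$ be a real reflexive Banach space and $f:X\to\mathbb{R}\cup\{+\infty\}$ a lower semicontinuous proper convex function, and let $T=\partial f$. Then for every $\epsilon\ge0$ and $x\in X$, $\breve{T}_{\mathcal{F}_{\partial f}}(\tfrac{\epsilon}{2},x)\subset T^{\mathrm{SE}}(\epsilon,x)$.
   Context: $X^{\ast}$ is the dual of $X$ with pairing $\langle\cdot,\cdot\rangle$; $\partial f$ is the convex subdifferential of $f$. The dual of $X\times X^{\ast}$ is identified with $X^{\ast}\times X$ via $\langle (x,x^{\ast}),(y^{\ast},y)\rangle=\langle x,y^{\ast}\rangle+\langle y,x^{\ast}\rangle$; for $g:X\times X^{\ast}\to\mathbb{R}\cup\{+\infty\}$, $g^{\ast}(y^{\ast},y)=\sup_{(x,x^{\ast})}\{\langle x,y^{\ast}\rangle+\langle y,x^{\ast}\rangle-g(x,x^{\ast})\}$. The Fitzpatrick function of $T$ is $\mathcal{F}_T(x,x^{\ast})=\sup\{\langle y,x^{\ast}\rangle+\langle x-y,y^{\ast}\rangle:(y,y^{\ast})\in\mathrm{gph}(T)\}$. For $\eta\ge0$, $\partial_\eta g(z)$ is the set of $(y^{\ast},y)\in X^{\ast}\times X$ with $g(w,w^{\ast})\ge g(z)+\langle (w,w^{\ast})-z,(y^{\ast},y)\rangle-\eta$ for all $(w,w^{\ast})$ when $g(z)<\infty$, and $\emptyset$ otherwise; $\breve{T}_g(\epsilon,x):=\{x^{\ast}:(x^{\ast},x)\in\partial_{2\epsilon}g(x,x^{\ast})\}$. The smallest enlargement of $T$ is $T^{\mathrm{SE}}(\epsilon,x):=\{x^{\ast}:\mathcal{F}_T^{\ast}(x^{\ast},x)\le\langle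 x,x^{\ast}\rangle+\epsilon\}$. *)

theory Defs
  imports "HOL-Analysis.Analysis" "HOL-Library.Extended_Real"
begin

definition pair :: "'a::real_normed_vector \<Rightarrow> ('a \<Rightarrow>\<^sub>L real) \<Rightarrow> real" where
  "pair x xs = blinfun_apply xs x"

definition reflexive_space :: "'a::real_normed_vector itself \<Rightarrow> bool" where
  "reflexive_space _ \<longleftrightarrow>
     (\<forall>\<phi> :: ('a \<Rightarrow>\<^sub>L real) \<Rightarrow>\<^sub>L real. \<exists>x::'a. \<forall>xs. blinfun_apply \<phi> xs = blinfun_apply xs x)"

(* Functions X \<rightarrow> \<real> \<union> {+\<infinity>} are modelled as ereal-valued functions never equal to -\<infinity>. *)
definition proper_fun :: "('a \<Rightarrow> ereal) \<Rightarrow> bool" where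
  "proper_fun f \<longleftrightarrow> (\<forall>x. f x \<noteq> -\<infinity>) \<and> (\<exists>x. f x \<noteq> \<infinity>)"

definition convex_fun :: "('a::real_vector \<Rightarrow> ereal) \<Rightarrow> bool" where
  "convex_fun f \<longleftrightarrow>
     (\<forall>x y t. 0 \<le> t \<and> t \<le> 1 \<longrightarrow>
        f (t *\<^sub>R x + (1 - t) *\<^sub>R y) \<le> ereal t * f x + ereal (1 - t) * f y)"

definition lsc_fun :: "('a::topological_space \<Rightarrow> ereal) \<Rightarrow> bool" where
  "lsc_fun f \<longleftrightarrow> (\<forall>c. closed {x. f x \<le> c})"

definition subdiff :: "('a::real_normed_vector \<Rightarrow> ereal) \<Rightarrow> 'a \<Rightarrow> ('a \<Rightarrow>\<^sub>L real) set" where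
  "subdiff f x = {xs. f x < \<infinity> \<and> (\<forall>y. f y \<ge> f x + ereal (pair (y - x) xs))}"

definition fitzpatrick ::
  "('a::real_normed_vector \<Rightarrow> ('a \<Rightarrow>\<^sub>L real) set) \<Rightarrow> 'a \<times> ('a \<Rightarrow>\<^sub>L real) \<Rightarrow> ereal" where
  "fitzpatrick T z = (case z of (x, xs) \<Rightarrow>
     (SUP p \<in> {(y, ys). ys \<in> T y}. ereal (pair (fst p) xs + pair (x - fst p) (snd p))))"

(* Conjugate of g : X \<times> X* \<rightarrow> \<real>\<union>{\<infinity>}, defined on X* \<times> X (dual of X \<times> X* via reflexivity). *)
definition conj_pair ::
  "('a::real_normed_vector \<times> ('a \<Rightarrow>\<^sub>L real) \<Rightarrow> ereal) \<Rightarrow> ('a \<Rightarrow>\<^sub>L real) \<times> 'a \<Rightarrow> ereal" where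
  "conj_pair g w = (case w of (ys, y) \<Rightarrow>
     (SUP p \<in> UNIV. ereal (pair (fst p) ys + pair y (snd p)) - g p))"

definition pair2 :: "'a::real_normed_vector \<times> ('a \<Rightarrow>\<^sub>L real) \<Rightarrow> ('a \<Rightarrow>\<^sub>L real) \<times> 'a \<Rightarrow> real" where
  "pair2 z w = pair (fst z) (fst w) + pair (snd w) (snd z)"

definition eps_subdiff ::
  "real \<Rightarrow> ('a::real_normed_vector \<times> ('a \<Rightarrow>\<^sub>L real) \<Rightarrow> ereal) \<Rightarrow> 'a \<times> ('a \<Rightarrow>\<^sub>L real)
     \<Rightarrow> (('a \<Rightarrow>\<^sub>L real) \<times> 'a) set" where
  "eps_subdiff \<eta> g z =
     (if g z < \<infinity> then {w. \<forall>v. g v \<ge> g z + ereal (pair2 (v - z) w) - ereal \<eta>} else {})"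

definition breve_T ::
  "('a::real_normed_vector \<times> ('a \<Rightarrow>\<^sub>L real) \<Rightarrow> ereal) \<Rightarrow> real \<Rightarrow> 'a \<Rightarrow> ('a \<Rightarrow>\<^sub>L real) set" where
  "breve_T g \<epsilon> x = {xs. (xs, x) \<in> eps_subdiff (2 * \<epsilon>) g (x, xs)}"

definition smallest_enl ::
  "('a::real_normed_vector \<Rightarrow> ('a \<Rightarrow>\<^sub>L real) set) \<Rightarrow> real \<Rightarrow> 'a \<Rightarrow> ('a \<Rightarrow>\<^sub>L real) set" where
  "smallest_enl T \<epsilon> x = {xs. conj_pair (fitzpatrick T) (xs, x) \<le> ereal (pair x xs + \<epsilon>)}"

end

theory Submission
  imports Defs
begin

text \<open>The heart of the matter is the inequality \<open>\<F>\<^bsub>\<partial>f\<^esub>(x, x\<^sup>*) \<ge> \<langle>x, x\<^sup>*\<rangle>\<close>. Tilting \<open>f\<close> by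
  \<open>x\<^sup>*\<close> and translating by \<open>x\<close>, it says that every proper convex lsc \<open>h\<close> has points
  \<open>b\<^sup>* \<in> \<partial>h(b)\<close> with \<open>\<langle>b, b\<^sup>*\<rangle>\<close> arbitrarily small. Such points come from Rockafellar's argument:
  an approximate minimiser \<open>y\<^sub>0\<close> of \<open>h + \<mu>\<parallel>\<cdot>\<parallel>\<close> carries a \<open>\<delta>\<close>-subgradient \<open>c\<^sup>*\<close> with
  \<open>\<parallel>c\<^sup>*\<parallel> \<le> \<mu>\<close> and \<open>\<langle>y\<^sub>0, c\<^sup>*\<rangle> \<le> \<delta> - \<mu>\<parallel>y\<^sub>0\<parallel>\<close>, and the Br{\o}ndsted--Rockafellar theorem
  (Ekeland's principle plus a Hahn--Banach sandwich) moves it to a nearby exact subgradient.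
  Given the inequality, the \<open>\<epsilon>\<close>-subgradient inequality defining \<open>T\<^sub>\<F>(\<epsilon>/2, x)\<close>, read at an
  arbitrary \<open>(y, y\<^sup>*)\<close>, is exactly the bound \<open>\<F>\<^sup>*(x\<^sup>*, x) \<le> \<langle>x, x\<^sup>*\<rangle> + \<epsilon>\<close>.\<close>

section \<open>Hahn--Banach for a convex majorant\<close>

text \<open>\<open>G\<close> is the graph of a linear functional on the subspace \<open>fst ` G\<close>.\<close>

definition dominated_linear_graph :: "('a::real_vector \<Rightarrow> real) \<Rightarrow> ('a \<times> real) set \<Rightarrow> bool" where
  "dominated_linear_graph p G \<longleftrightarrow>
     (\<forall>x a y b. (x, a) \<in> G \<longrightarrow> (y, b) \<in> G \<longrightarrow> (x + y, a + b) \<in> G) \<and>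
     (\<forall>x a r. (x, a) \<in> G \<longrightarrow> (r *\<^sub>R x, r * a) \<in> G) \<and>
     (\<forall>x a b. (x, a) \<in> G \<longrightarrow> (x, b) \<in> G \<longrightarrow> a = b) \<and>
     (\<forall>x a. (x, a) \<in> G \<longrightarrow> a \<le> p x)"

lemma dominated_linear_graphD:
  assumes "dominated_linear_graph p G"
  shows dominated_linear_graph_add: "(x, a) \<in> G \<Longrightarrow> (y, b) \<in> G \<Longrightarrow> (x + y, a + b) \<in> G"
    and dominated_linear_graph_scaleR: "(x, a) \<in> G \<Longrightarrow> (r *\<^sub>R x, r * a) \<in> G"
    and dominated_linear_graph_unique: "(x, a) \<in> G \<Longrightarrow> (x, b) \<in> G \<Longrightarrow> a = b"
    and dominated_linear_graph_le: "(x, a) \<in> G \<Longrightarrow> a \<le> p x"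
  using assms unfolding dominated_linear_graph_def by blast+

lemma dominated_linear_graph_Union_chain:
  assumes "C \<in> chains {G. dominated_linear_graph p G}"
  shows "dominated_linear_graph p (\<Union>C)"
proof -
  have member: "dominated_linear_graph p G" if "G \<in> C" for G
    using assms that by (auto simp: chains_def)
  have common: "\<exists>D\<in>C. A \<subseteq> D \<and> B \<subseteq> D" if "A \<in> C" "B \<in> C" for A B
  proof -
    have "A \<subseteq> B \<or> B \<subseteq> A"
      using assms that by (simp add: chains_def chain_subset_def)
    then show ?thesis
      using that by blast
  qed
  show ?thesis
    unfolding dominated_linear_graph_def
  proof (intro conjI allI impI)
    fix x a y b assume "(x, a) \<in> \<Union>C" "(y, b) \<in> \<Union>C"
    then obtain D where "D \<in> C" "(x, a) \<in> D" "(y, b) \<in> D"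
      using common by blast
    then show "(x + y, a + b) \<in> \<Union>C"
      using member dominated_linear_graph_add by blast
  next
    fix x a b assume "(x, a) \<in> \<Union>C" "(x, b) \<in> \<Union>C"
    then obtain D where "D \<in> C" "(x, a) \<in> D" "(x, b) \<in> D"
      using common by blast
    then show "a = b"
      using member dominated_linear_graph_unique by blast
  next
    fix x a r assume "(x, a) \<in> \<Union>C"
    then show "(r *\<^sub>R x, r * a) \<in> \<Union>C"
      using member dominated_linear_graph_scaleR by blast
  next
    fix x a assume "(x, a) \<in> \<Union>C"
    then show "a \<le> p x"
      using member dominated_linear_graph_le by blast
  qed
qed

lemma dominated_linear_graph_slopes_le:
  assumes p: "convex_on UNIV p" and G: "dominated_linear_graph p G"
    and "(x, a) \<in> G" "(x', a') \<in> G" and "t > 0" "t' > 0"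
  shows "(a' - p (x' - t' *\<^sub>R v)) / t' \<le> (p (x + t *\<^sub>R v) - a) / t"
proof -
  define \<alpha> where "\<alpha> = t / (t + t')"
  have \<alpha>: "0 \<le> \<alpha>" "\<alpha> \<le> 1" "1 - \<alpha> = t' / (t + t')"
    using \<open>t > 0\<close> \<open>t' > 0\<close> by (auto simp: \<alpha>_def field_simps)
  have "((1 - \<alpha>) *\<^sub>R x + \<alpha> *\<^sub>R x', (1 - \<alpha>) * a + \<alpha> * a') \<in> G"
    using assms(3,4) by (intro dominated_linear_graph_add[OF G] dominated_linear_graph_scaleR[OF G])
  then have "(1 - \<alpha>) * a + \<alpha> * a' \<le> p ((1 - \<alpha>) *\<^sub>R x + \<alpha> *\<^sub>R x')"
    by (rule dominated_linear_graph_le[OF G])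
  also have "(1 - \<alpha>) *\<^sub>R x + \<alpha> *\<^sub>R x' = (1 - \<alpha>) *\<^sub>R (x + t *\<^sub>R v) + \<alpha> *\<^sub>R (x' - t' *\<^sub>R v)"
  proof -
    have "(1 - \<alpha>) * t = \<alpha> * t'"
      using \<open>t > 0\<close> \<open>t' > 0\<close> by (simp add: \<alpha>_def field_simps)
    moreover have "(1 - \<alpha>) *\<^sub>R (x + t *\<^sub>R v) + \<alpha> *\<^sub>R (x' - t' *\<^sub>R v)
        = (1 - \<alpha>) *\<^sub>R x + \<alpha> *\<^sub>R x' + (((1 - \<alpha>) * t) *\<^sub>R v - (\<alpha> * t') *\<^sub>R v)"
      by (simp add: algebra_simps)
    ultimately show ?thesis
      by simp
  qed
  also have "p \<dots> \<le> (1 - \<alpha>) * p (x + t *\<^sub>R v) + \<alpha> * p (x' - t' *\<^sub>R v)"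
    using \<alpha> by (intro convex_onD[OF p]) auto
  finally have ineq: "(1 - \<alpha>) * a + \<alpha> * a' \<le> (1 - \<alpha>) * p (x + t *\<^sub>R v) + \<alpha> * p (x' - t' *\<^sub>R v)" .
  have s: "(t + t') * \<alpha> = t"
    using \<open>t > 0\<close> \<open>t' > 0\<close> by (simp add: \<alpha>_def)
  have weights: "(t + t') * ((1 - \<alpha>) * b + \<alpha> * b') = t' * b + t * b'" for b b'
  proof -
    have "(t + t') * ((1 - \<alpha>) * b + \<alpha> * b') = (t + t') * b - ((t + t') * \<alpha>) * b + ((t + t') * \<alpha>) * b'"
      by (simp add: algebra_simps)
    then show ?thesis
      unfolding s by (simp add: algebra_simps)
  qed
  have "t' * a + t * a' \<le> t' * p (x + t *\<^sub>R v) + t * p (x' - t' *\<^sub>R v)"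
    using mult_left_mono[OF ineq, of "t + t'"] \<open>t > 0\<close> \<open>t' > 0\<close> unfolding weights by simp
  then show ?thesis
    using \<open>t > 0\<close> \<open>t' > 0\<close> by (simp add: field_simps)
qed

lemma dominated_linear_graph_extension_slope:
  assumes p: "convex_on UNIV p" and G: "dominated_linear_graph p G" and "(0, 0) \<in> G"
  obtains c where "\<And>x a t. (x, a) \<in> G \<Longrightarrow> a + t * c \<le> p (x + t *\<^sub>R v)"
proof -
  define Lo where "Lo = {(a - p (x - t *\<^sub>R v)) / t | x a t. (x, a) \<in> G \<and> t > 0}"
  define Up where "Up = {(p (x + t *\<^sub>R v) - a) / t | x a t. (x, a) \<in> G \<and> t > 0}"
  have Lo_le_Up: "l \<le> u" if "l \<in> Lo" "u \<in> Up" for l u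
    using that dominated_linear_graph_slopes_le[OF p G] unfolding Lo_def Up_def by blast
  have "(0 - p (0 - 1 *\<^sub>R v)) / 1 \<in> Lo"
    unfolding Lo_def using \<open>(0, 0) \<in> G\<close> by (intro CollectI exI[of _ 0] exI[of _ 1] conjI) auto
  moreover have "(p (0 + 1 *\<^sub>R v) - 0) / 1 \<in> Up"
    unfolding Up_def using \<open>(0, 0) \<in> G\<close> by (intro CollectI exI[of _ 0] exI[of _ 1] conjI) auto
  ultimately have "Lo \<noteq> {}" "bdd_above Lo"
    using Lo_le_Up by (auto simp: bdd_above_def)
  then have Lo_le: "l \<le> Sup Lo" if "l \<in> Lo" for l
    using that by (simp add: cSup_upper)
  have le_Up: "Sup Lo \<le> u" if "u \<in> Up" for u
    using that Lo_le_Up \<open>Lo \<noteq> {}\<close> by (simp add: cSup_least)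
  show ?thesis
  proof (rule that[of "Sup Lo"])
    fix x a and t :: real assume xa: "(x, a) \<in> G"
    consider "t > 0" | "t = 0" | "t < 0" by linarith
    then show "a + t * Sup Lo \<le> p (x + t *\<^sub>R v)"
    proof cases
      case 1
      then have "Sup Lo \<le> (p (x + t *\<^sub>R v) - a) / t"
        using xa by (intro le_Up) (auto simp: Up_def)
      then show ?thesis
        using 1 by (simp add: field_simps)
    next
      case 2
      then show ?thesis
        using dominated_linear_graph_le[OF G xa] by simp
    next
      case 3
      then have "(a - p (x - (- t) *\<^sub>R v)) / (- t) \<in> Lo"
        unfolding Lo_def using xa by (intro CollectI exI[of _ x] exI[of _ a] exI[of _ "- t"]) simp
      then have "(a - p (x - (- t) *\<^sub>R v)) / (- t) \<le> Sup Lo"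
        by (rule Lo_le)
      then show ?thesis
        using 3 by (simp add: field_simps)
    qed
  qed
qed

lemma dominated_linear_graph_coordinate_unique:
  assumes G: "dominated_linear_graph p G" and v: "v \<notin> fst ` G"
    and "(x, a) \<in> G" "(x', a') \<in> G" and eq: "x + t *\<^sub>R v = x' + t' *\<^sub>R v"
  shows "t = t'"
proof (rule ccontr)
  assume "t \<noteq> t'"
  have "(x + (-1) *\<^sub>R x', a + (-1) * a') \<in> G"
    using assms(3,4) by (intro dominated_linear_graph_add[OF G] dominated_linear_graph_scaleR[OF G])
  then have "((1 / (t' - t)) *\<^sub>R (x - x'), (1 / (t' - t)) * (a - a')) \<in> G"
    using dominated_linear_graph_scaleR[OF G] by fastforce
  moreover have "x - x' = (t' - t) *\<^sub>R v"
    using eq by (simp add: algebra_simps)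
  ultimately have "v \<in> fst ` G"
    using \<open>t \<noteq> t'\<close> by (force intro: image_eqI[of v fst])
  then show False
    using v by blast
qed

lemma dominated_linear_graph_extend:
  assumes G: "dominated_linear_graph p G" and v: "v \<notin> fst ` G"
    and c: "\<And>x a t. (x, a) \<in> G \<Longrightarrow> a + t * c \<le> p (x + t *\<^sub>R v)"
  shows "dominated_linear_graph p {(x + t *\<^sub>R v, a + t * c) | x a t. (x, a) \<in> G}"
    (is "dominated_linear_graph p ?E")
proof -
  have in_E: "(x + t *\<^sub>R v, a + t * c) \<in> ?E" if "(x, a) \<in> G" for x a t
    using that by blast
  show ?thesis
    unfolding dominated_linear_graph_def
  proof (intro conjI allI impI)
    fix y b y' b' assume "(y, b) \<in> ?E" "(y', b') \<in> ?E"
    then obtain x a t x' a' t' where "(x, a) \<in> G" "y = x + t *\<^sub>R v" "b = a + t * c"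
      and "(x', a') \<in> G" "y' = x' + t' *\<^sub>R v" "b' = a' + t' * c"
      by blast
    moreover have "(x + x', a + a') \<in> G"
      using G \<open>(x, a) \<in> G\<close> \<open>(x', a') \<in> G\<close> by (rule dominated_linear_graph_add)
    ultimately show "(y + y', b + b') \<in> ?E"
      using in_E[of "x + x'" "a + a'" "t + t'"] by (simp add: algebra_simps)
  next
    fix y b r assume "(y, b) \<in> ?E"
    then obtain x a t where "(x, a) \<in> G" "y = x + t *\<^sub>R v" "b = a + t * c"
      by blast
    moreover have "(r *\<^sub>R x, r * a) \<in> G"
      using G \<open>(x, a) \<in> G\<close> by (rule dominated_linear_graph_scaleR)
    ultimately show "(r *\<^sub>R y, r * b) \<in> ?E"
      using in_E[of "r *\<^sub>R x" "r * a" "r * t"] by (simp add: algebra_simps)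
  next
    fix y b b' assume "(y, b) \<in> ?E" "(y, b') \<in> ?E"
    then obtain x a t x' a' t' where xa: "(x, a) \<in> G" "y = x + t *\<^sub>R v" "b = a + t * c"
      and xa': "(x', a') \<in> G" "y = x' + t' *\<^sub>R v" "b' = a' + t' * c"
      by blast
    then have "t = t'"
      by (metis dominated_linear_graph_coordinate_unique[OF G v])
    then show "b = b'"
      using xa xa' dominated_linear_graph_unique[OF G] by auto
  next
    fix y b assume "(y, b) \<in> ?E"
    then show "b \<le> p y"
      using c by blast
  qed
qed

theorem hahn_banach_convex_majorant:
  fixes p :: "'a::real_vector \<Rightarrow> real"
  assumes p: "convex_on UNIV p" and "p 0 \<ge> 0"
  obtains L where "linear L" "\<And>x. L x \<le> p x"
proof -
  obtain M where M: "dominated_linear_graph p M"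
    and maximal: "\<And>G. dominated_linear_graph p G \<Longrightarrow> M \<subseteq> G \<Longrightarrow> G = M"
    using Zorn_Lemma[of "{G. dominated_linear_graph p G}"] dominated_linear_graph_Union_chain
    by auto
  have "dominated_linear_graph p {(0, 0)}"
    using \<open>p 0 \<ge> 0\<close> by (auto simp: dominated_linear_graph_def)
  then have "M \<noteq> {}"
    using maximal by blast
  then obtain x0 a0 where "(x0, a0) \<in> M"
    by auto
  then have zero: "(0, 0) \<in> M"
    using dominated_linear_graph_scaleR[OF M, of x0 a0 0] by simp
  have total: "v \<in> fst ` M" for v
  proof (rule ccontr)
    assume v: "v \<notin> fst ` M"
    obtain c where c: "\<And>x a t. (x, a) \<in> M \<Longrightarrow> a + t * c \<le> p (x + t *\<^sub>R v)"
      using dominated_linear_graph_extension_slope[OF p M zero] by blast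
    let ?E = "{(x + t *\<^sub>R v, a + t * c) | x a t. (x, a) \<in> M}"
    have "M \<subseteq> ?E"
      by (force intro: exI[of _ 0])
    then have "?E = M"
      using maximal dominated_linear_graph_extend[OF M v c] by blast
    moreover have "(v, c) \<in> ?E"
      using zero by force
    ultimately show False
      using v by force
  qed
  define L where "L x = (THE a. (x, a) \<in> M)" for x
  have L: "(x, a) \<in> M \<longleftrightarrow> a = L x" for x a
    using total[of x] dominated_linear_graph_unique[OF M] unfolding L_def
    by (metis (no_types, lifting) fst_conv imageE prod.collapse the_equality)
  show ?thesis
  proof (rule that)
    show "linear L"
      by (rule linearI) (use L dominated_linear_graph_add[OF M] dominated_linear_graph_scaleR[OF M]
          in \<open>metis real_scaleR_def\<close>)+
    show "L x \<le> p x" for x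
      using L dominated_linear_graph_le[OF M] by blast
  qed
qed

lemma convex_funD_finite:
  assumes "convex_fun h" "0 \<le> t" "t \<le> 1" "h a = ereal ra" "h b = ereal rb"
  shows "h (t *\<^sub>R a + (1 - t) *\<^sub>R b) \<le> ereal (t * ra + (1 - t) * rb)"
  using assms unfolding convex_fun_def by (metis times_ereal.simps(1) plus_ereal.simps(1))

lemma convex_funI_finite:
  assumes "\<And>u. h u \<noteq> -\<infinity>"
    and "\<And>a b t ra rb. 0 \<le> t \<Longrightarrow> t \<le> 1 \<Longrightarrow> h a = ereal ra \<Longrightarrow> h b = ereal rb \<Longrightarrow>
      h (t *\<^sub>R a + (1 - t) *\<^sub>R b) \<le> ereal (t * ra + (1 - t) * rb)"
  shows "convex_fun h"
  unfolding convex_fun_def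
proof (intro allI impI, elim conjE)
  fix a b and t :: real assume t: "0 \<le> t" "t \<le> 1"
  consider "t = 0" | "t = 1" | "0 < t" "t < 1"
    using t by linarith
  then show "h (t *\<^sub>R a + (1 - t) *\<^sub>R b) \<le> ereal t * h a + ereal (1 - t) * h b"
  proof cases
    case 3
    show ?thesis
    proof (cases "h a = \<infinity> \<or> h b = \<infinity>")
      case True
      then show ?thesis
        using 3 assms(1)[of a] assms(1)[of b] by auto
    next
      case False
      then obtain ra rb where "h a = ereal ra" "h b = ereal rb"
        using assms(1)[of a] assms(1)[of b] by (cases "h a"; cases "h b") auto
      then show ?thesis
        using assms(2)[OF t] by simp
    qed
  qed (use assms(1)[of a] assms(1)[of b] in \<open>cases "h a"; cases "h b"; simp\<close>)+
qed

lemma convex_fun_translate: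
  assumes "convex_fun h"
  shows "convex_fun (\<lambda>u. h (u + x))"
proof -
  have "t *\<^sub>R a + (1 - t) *\<^sub>R b + x = t *\<^sub>R (a + x) + (1 - t) *\<^sub>R (b + x)" for a b t
    by (simp add: algebra_simps)
  then show ?thesis
    using assms unfolding convex_fun_def by metis
qed

lemma convex_fun_diff_linear:
  assumes "proper_fun h" "convex_fun h" "linear L"
  shows "convex_fun (\<lambda>u. h u - ereal (L u))"
proof (rule convex_funI_finite)
  show "h u - ereal (L u) \<noteq> -\<infinity>" for u
    using \<open>proper_fun h\<close> by (cases "h u") (auto simp: proper_fun_def)
next
  fix a b ra rb and t :: real
  assume t: "0 \<le> t" "t \<le> 1" and "h a - ereal (L a) = ereal ra" "h b - ereal (L b) = ereal rb"
  then have "h a = ereal (ra + L a)" "h b = ereal (rb + L b)"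
    by (cases "h a"; cases "h b"; simp)+
  then have "h (t *\<^sub>R a + (1 - t) *\<^sub>R b) \<le> ereal (t * (ra + L a) + (1 - t) * (rb + L b))"
    using convex_funD_finite[OF \<open>convex_fun h\<close> t] by blast
  moreover have "L (t *\<^sub>R a + (1 - t) *\<^sub>R b) = t * L a + (1 - t) * L b"
    using \<open>linear L\<close> by (simp add: linear_add linear_scale)
  ultimately show "h (t *\<^sub>R a + (1 - t) *\<^sub>R b) - ereal (L (t *\<^sub>R a + (1 - t) *\<^sub>R b))
      \<le> ereal (t * ra + (1 - t) * rb)"
    by (cases "h (t *\<^sub>R a + (1 - t) *\<^sub>R b)") (simp_all add: algebra_simps)
qed

lemma lsc_funD:
  assumes "lsc_fun h" "c < h z"
  shows "\<forall>\<^sub>F u in nhds z. c < h u"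
proof -
  have "open (- {u. h u \<le> c})" "z \<in> - {u. h u \<le> c}"
    using assms unfolding lsc_fun_def by auto
  then show ?thesis
    by (rule eventually_mono[OF eventually_nhds_in_open]) auto
qed

lemma lsc_funI:
  assumes "\<And>z c. c < h z \<Longrightarrow> \<forall>\<^sub>F u in nhds z. c < h u"
  shows "lsc_fun h"
  unfolding lsc_fun_def
proof
  fix c
  have "open {u. c < h u}"
  proof (rule topological_space_class.openI)
    fix z assume "z \<in> {u. c < h u}"
    then obtain S where "open S" "z \<in> S" "\<forall>u\<in>S. c < h u"
      using assms unfolding eventually_nhds by blast
    then show "\<exists>T. open T \<and> z \<in> T \<and> T \<subseteq> {u. c < h u}"
      by blast
  qed
  then show "closed {u. h u \<le> c}"
    by (simp add: closed_def Compl_eq not_le)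
qed

lemma lsc_fun_translate:
  fixes h :: "'a::real_normed_vector \<Rightarrow> ereal"
  assumes "lsc_fun h"
  shows "lsc_fun (\<lambda>u. h (u + x))"
proof -
  have "{u. h (u + x) \<le> c} = (+) (- x) ` {y. h y \<le> c}" for c
    by (force simp: algebra_simps)
  then show ?thesis
    using assms closed_translation unfolding lsc_fun_def by metis
qed

lemma lsc_fun_add_continuous:
  assumes "lsc_fun h" "continuous_on UNIV g"
  shows "lsc_fun (\<lambda>u. h u + ereal (g u))"
proof (rule lsc_funI)
  fix z c assume "c < h z + ereal (g z)"
  then obtain r where r: "c < ereal r" "ereal r < h z + ereal (g z)"
    using ereal_dense2 by blast
  then have "ereal (r - g z) < h z"
    by (cases "h z") auto
  then obtain s where s: "ereal (r - g z) < ereal s" "ereal s < h z"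
    using ereal_dense2 by blast
  have "\<forall>\<^sub>F u in nhds z. ereal s < h u"
    using assms(1) s(2) by (rule lsc_funD)
  moreover have "open {u. r - s < g u}"
    using assms(2) by (intro open_Collect_less continuous_on_const)
  then have "\<forall>\<^sub>F u in nhds z. r - s < g u"
    using s(1) eventually_nhds_in_open[of "{u. r - s < g u}" z] by simp
  ultimately show "\<forall>\<^sub>F u in nhds z. c < h u + ereal (g u)"
  proof eventually_elim
    case (elim u)
    then have "ereal r < h u + ereal (g u)"
      by (cases "h u") auto
    then show ?case
      using r(1) by order
  qed
qed

section \<open>The sandwich theorem\<close>

lemma linear_le_affine_imp_abs_le:
  fixes L :: "'a::real_normed_vector \<Rightarrow> real"
  assumes "linear L" and bound: "\<And>x. L x \<le> C + M * norm x"
  shows "\<bar>L x\<bar> \<le> M * norm x"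
proof -
  have le: "L y \<le> M * norm y" for y
  proof (rule ccontr)
    assume "\<not> L y \<le> M * norm y"
    then have d: "L y - M * norm y > 0"
      by simp
    define s where "s = (\<bar>C\<bar> + 1) / (L y - M * norm y)"
    have "s > 0"
      using d by (simp add: s_def)
    have "s * (L y - M * norm y) = \<bar>C\<bar> + 1"
      using d by (simp add: s_def)
    moreover have "L (s *\<^sub>R y) \<le> C + M * norm (s *\<^sub>R y)"
      by (rule bound)
    then have "s * L y \<le> C + s * (M * norm y)"
      using \<open>s > 0\<close> \<open>linear L\<close> by (simp add: linear_scale mult.left_commute)
    ultimately show False
      by (simp add: algebra_simps)
  qed
  show ?thesis
    using le[of x] le[of "- x"] \<open>linear L\<close> by (simp add: linear_neg abs_le_iff)
qed

lemma linear_le_affine_imp_blinfun: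
  fixes L0 :: "'a::real_normed_vector \<Rightarrow> real"
  assumes "linear L0" "\<And>x. L0 x \<le> C + M * norm x" "M \<ge> 0"
  obtains L :: "'a \<Rightarrow>\<^sub>L real" where "blinfun_apply L = L0" "norm L \<le> M"
proof -
  have bound: "\<bar>L0 x\<bar> \<le> M * norm x" for x
    using assms(1,2) by (rule linear_le_affine_imp_abs_le)
  then have "bounded_linear L0"
    using \<open>linear L0\<close> by (intro bounded_linear_intro[of _ M]) (auto simp: linear_add linear_scale mult.commute)
  then have "blinfun_apply (Blinfun L0) = L0"
    by (rule bounded_linear_Blinfun_apply)
  moreover have "norm (Blinfun L0) \<le> M"
    using bound \<open>M \<ge> 0\<close> by (intro norm_blinfun_bound) (auto simp: calculation)
  ultimately show ?thesis
    by (rule that)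
qed

definition minorant_gap :: "('a::real_vector \<Rightarrow> ereal) \<Rightarrow> ('a \<Rightarrow> real) \<Rightarrow> 'a \<Rightarrow> ereal" where
  "minorant_gap h \<psi> z = (INF u. h (z + u) - ereal (\<psi> u))"

lemma minorant_gap_le: "minorant_gap h \<psi> z \<le> h (z + u) - ereal (\<psi> u)"
  unfolding minorant_gap_def by (rule INF_lower) simp

lemma minorant_gap_lower:
  fixes \<psi> :: "'a::real_normed_vector \<Rightarrow> real"
  assumes "m-lipschitz_on UNIV \<psi>" and below: "\<And>u. ereal (\<psi> u) \<le> h u"
  shows "ereal (- m * norm z) \<le> minorant_gap h \<psi> z"
  unfolding minorant_gap_def
proof (rule INF_greatest)
  fix u
  have "\<psi> u - \<psi> (z + u) \<le> m * norm z"
    using lipschitz_onD[OF assms(1), of u "z + u"] by (simp add: dist_norm abs_le_iff)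
  then have "ereal (- m * norm z + \<psi> u) \<le> ereal (\<psi> (z + u))"
    by simp
  then have "ereal (- m * norm z + \<psi> u) \<le> h (z + u)"
    using below[of "z + u"] by order
  then show "ereal (- m * norm z) \<le> h (z + u) - ereal (\<psi> u)"
    by (cases "h (z + u)") auto
qed

lemma minorant_gap_upper:
  fixes \<psi> :: "'a::real_normed_vector \<Rightarrow> real"
  assumes "m-lipschitz_on UNIV \<psi>" and "h y = ereal r"
  shows "minorant_gap h \<psi> z \<le> ereal (r - \<psi> y + m * norm z)"
proof -
  have "\<psi> y - \<psi> (y - z) \<le> m * norm z"
    using lipschitz_onD[OF assms(1), of y "y - z"] by (simp add: dist_norm abs_le_iff)
  then have "h (z + (y - z)) - ereal (\<psi> (y - z)) \<le> ereal (r - \<psi> y + m * norm z)"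
    using assms(2) by simp
  then show ?thesis
    using minorant_gap_le order_trans by blast
qed

lemma convex_on_minorant_gap:
  fixes \<psi> :: "'a::real_normed_vector \<Rightarrow> real"
  assumes h: "convex_fun h" and \<psi>: "convex_on UNIV (\<lambda>u. - \<psi> u)"
    and finite: "\<And>z. minorant_gap h \<psi> z = ereal (kr z)"
  shows "convex_on UNIV kr"
proof (rule convex_onI)
  fix t :: real and z1 z2 :: 'a assume t: "0 < t" "t < 1"
  have finite_h: "h (z + u) \<noteq> -\<infinity>" for z u
    using minorant_gap_le[of h \<psi> z u] finite[of z] by auto
  show "kr ((1 - t) *\<^sub>R z1 + t *\<^sub>R z2) \<le> (1 - t) * kr z1 + t * kr z2"
  proof (rule field_le_epsilon)
    fix e :: real assume "e > 0"
    then have "minorant_gap h \<psi> z < ereal (kr z + e)" for z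
      using finite[of z] by simp
    then obtain u1 u2 where u1: "h (z1 + u1) - ereal (\<psi> u1) < ereal (kr z1 + e)"
      and u2: "h (z2 + u2) - ereal (\<psi> u2) < ereal (kr z2 + e)"
      unfolding minorant_gap_def by (meson INF_less_iff)
    then obtain r1 r2 where r: "h (z1 + u1) = ereal r1" "h (z2 + u2) = ereal r2"
      using finite_h by (cases "h (z1 + u1)"; cases "h (z2 + u2)") auto
    define u where "u = (1 - t) *\<^sub>R u1 + t *\<^sub>R u2"
    have "(1 - t) *\<^sub>R z1 + t *\<^sub>R z2 + u = (1 - t) *\<^sub>R (z1 + u1) + (1 - (1 - t)) *\<^sub>R (z2 + u2)"
      by (simp add: u_def algebra_simps)
    then have "h ((1 - t) *\<^sub>R z1 + t *\<^sub>R z2 + u) \<le> ereal ((1 - t) * r1 + t * r2)"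
      using convex_funD_finite[OF h, of "1 - t" "z1 + u1" r1 "z2 + u2" r2] t r by simp
    moreover have "- \<psi> u \<le> (1 - t) * - \<psi> u1 + t * - \<psi> u2"
      using convex_onD[OF \<psi>, of t u1 u2] t by (simp add: u_def)
    ultimately have "h ((1 - t) *\<^sub>R z1 + t *\<^sub>R z2 + u) - ereal (\<psi> u)
        \<le> ereal ((1 - t) * (r1 - \<psi> u1) + t * (r2 - \<psi> u2))"
      by (cases "h ((1 - t) *\<^sub>R z1 + t *\<^sub>R z2 + u)") (simp_all add: algebra_simps)
    then have "ereal (kr ((1 - t) *\<^sub>R z1 + t *\<^sub>R z2)) \<le> ereal ((1 - t) * (r1 - \<psi> u1) + t * (r2 - \<psi> u2))"
      using minorant_gap_le[of h \<psi> "(1 - t) *\<^sub>R z1 + t *\<^sub>R z2" u] unfolding finite by order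
    moreover have "(1 - t) * (r1 - \<psi> u1) + t * (r2 - \<psi> u2) \<le> (1 - t) * (kr z1 + e) + t * (kr z2 + e)"
      using u1 u2 r t by (auto intro!: add_mono mult_left_mono)
    ultimately show "kr ((1 - t) *\<^sub>R z1 + t *\<^sub>R z2) \<le> (1 - t) * kr z1 + t * kr z2 + e"
      by (simp add: algebra_simps)
  qed
qed simp

text \<open>Hahn--Banach applied to the convex, finite function
  \<open>minorant_gap h \<psi>\<close> yields the linear part; the Lipschitz bound on \<open>\<psi>\<close> makes it continuous.\<close>

lemma affine_between_concave_and_convex:
  fixes h :: "'a::real_normed_vector \<Rightarrow> ereal" and \<psi> :: "'a \<Rightarrow> real"
  assumes h: "proper_fun h" "convex_fun h"
    and \<psi>: "convex_on UNIV (\<lambda>u. - \<psi> u)" "m-lipschitz_on UNIV \<psi>"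
    and below: "\<And>u. ereal (\<psi> u) \<le> h u"
  obtains L :: "'a \<Rightarrow>\<^sub>L real" and \<beta>
  where "\<And>u. ereal (L u + \<beta>) \<le> h u" "\<And>u. \<psi> u \<le> L u + \<beta>" "norm L \<le> m"
proof -
  obtain y r where hy: "h y = ereal r"
    using h(1) unfolding proper_fun_def by (metis ereal_cases)
  define kr where "kr z = real_of_ereal (minorant_gap h \<psi> z)" for z
  have lower: "ereal (- m * norm z) \<le> minorant_gap h \<psi> z" for z
    using \<psi>(2) below by (rule minorant_gap_lower)
  have upper: "minorant_gap h \<psi> z \<le> ereal (r - \<psi> y + m * norm z)" for z
    using \<psi>(2) hy by (rule minorant_gap_upper)
  have k: "minorant_gap h \<psi> z = ereal (kr z)" for z
    using lower[of z] upper[of z] unfolding kr_def by (cases "minorant_gap h \<psi> z") auto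
  have "convex_on UNIV kr"
    using h(2) \<psi>(1) k by (rule convex_on_minorant_gap)
  moreover have "kr 0 \<ge> 0"
    using lower[of 0] unfolding k by simp
  ultimately obtain L0 where "linear L0" and L0_le: "\<And>z. L0 z \<le> kr z"
    by (rule hahn_banach_convex_majorant) blast
  have "L0 z \<le> (r - \<psi> y) + m * norm z" for z
    using L0_le[of z] upper[of z] by (simp add: k)
  then obtain L :: "'a \<Rightarrow>\<^sub>L real" where L: "blinfun_apply L = L0" "norm L \<le> m"
    using linear_le_affine_imp_blinfun[OF \<open>linear L0\<close> _ lipschitz_on_nonneg[OF \<psi>(2)]] by blast
  have gap: "\<psi> u - L0 u \<le> r' - L0 y'" if "h y' = ereal r'" for u y' r'
  proof -
    have "ereal (kr (y' - u)) \<le> h (y' - u + u) - ereal (\<psi> u)"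
      unfolding k[symmetric] by (rule minorant_gap_le)
    then have "kr (y' - u) \<le> r' - \<psi> u"
      using that by simp
    moreover have "L0 (y' - u) = L0 y' - L0 u"
      using \<open>linear L0\<close> by (rule linear_diff)
    ultimately show ?thesis
      using L0_le[of "y' - u"] by simp
  qed
  define \<beta> where "\<beta> = (SUP u. \<psi> u - L0 u)"
  have bdd: "bdd_above (range (\<lambda>u. \<psi> u - L0 u))"
    using gap[OF hy] by (auto simp: bdd_above_def)
  show ?thesis
  proof (rule that[of L \<beta>])
    show "\<psi> u \<le> L u + \<beta>" for u
      using cSUP_upper[OF _ bdd, of u] by (simp add: L(1) \<beta>_def)
    show "ereal (L u + \<beta>) \<le> h u" for u
    proof (cases "h u")
      case (real r')
      then have "\<beta> \<le> r' - L0 u"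
        unfolding \<beta>_def using gap by (intro cSUP_least) auto
      then show ?thesis
        using real by (simp add: L(1))
    qed (use h(1) in \<open>auto simp: proper_fun_def\<close>)
  qed (fact L(2))
qed

lemma affine_between_cone_and_convex:
  fixes h :: "'a::real_normed_vector \<Rightarrow> ereal"
  assumes "proper_fun h" "convex_fun h" "m \<ge> 0"
    and cone: "\<And>u. ereal (c - m * norm (u - q)) \<le> h u"
  obtains L :: "'a \<Rightarrow>\<^sub>L real" and \<beta>
  where "\<And>u. ereal (L u + \<beta>) \<le> h u" "\<And>u. c - m * norm (u - q) \<le> L u + \<beta>" "norm L \<le> m"
proof -
  have "convex_on UNIV (\<lambda>u. m * dist q u + - c)"
    using \<open>m \<ge> 0\<close> by (intro convex_on_add convex_on_cmul convex_on_dist) (auto simp: convex_on_const)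
  then have "convex_on UNIV (\<lambda>u. - (c - m * norm (u - q)))"
    by (simp add: dist_norm norm_minus_commute)
  moreover have "m-lipschitz_on UNIV (\<lambda>u. c - m * norm (u - q))"
  proof (rule lipschitz_onI)
    fix x y :: 'a
    have "\<bar>norm (x - q) - norm (y - q)\<bar> \<le> norm (x - y)"
      using norm_triangle_ineq3[of "x - q" "y - q"] by simp
    then show "dist (c - m * norm (x - q)) (c - m * norm (y - q)) \<le> m * dist x y"
      using \<open>m \<ge> 0\<close> mult_left_mono
      by (simp add: dist_real_def dist_norm abs_mult right_diff_distrib[symmetric] flip: abs_minus_commute)
  qed (rule \<open>m \<ge> 0\<close>)
  ultimately show ?thesis
    using affine_between_concave_and_convex[OF assms(1,2) _ _ cone] that by blast
qed

text \<open>Lower semicontinuity gives the bound \<open>r - 1\<close> on a ball around \<open>y\<close>; convexity carries it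
  outward along rays with slope \<open>1/\<rho>\<close>.\<close>

lemma lsc_convex_cone_minorant:
  fixes h :: "'a::real_normed_vector \<Rightarrow> ereal"
  assumes h: "proper_fun h" "convex_fun h" "lsc_fun h" and hy: "h y = ereal r"
  obtains m where "m \<ge> 0" "\<And>u. ereal (r - 1 - m * norm (u - y)) \<le> h u"
proof -
  have "ereal (r - 1) < h y"
    using hy by simp
  then obtain d where "d > 0" and near: "\<And>u. dist u y < d \<Longrightarrow> ereal (r - 1) < h u"
    using lsc_funD[OF h(3)] unfolding eventually_nhds_metric by blast
  define \<rho> where "\<rho> = d / 2"
  have "\<rho> > 0" "\<rho> < d"
    using \<open>d > 0\<close> by (auto simp: \<rho>_def)
  show ?thesis
  proof (rule that[of "1 / \<rho>"])
    show "1 / \<rho> \<ge> 0"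
      using \<open>\<rho> > 0\<close> by simp
    fix u
    show "ereal (r - 1 - 1 / \<rho> * norm (u - y)) \<le> h u"
    proof (cases "norm (u - y) \<le> \<rho>")
      case True
      then have "ereal (r - 1) < h u"
        using \<open>\<rho> < d\<close> by (intro near) (simp add: dist_norm)
      moreover have "r - 1 - 1 / \<rho> * norm (u - y) \<le> r - 1"
        using \<open>\<rho> > 0\<close> by simp
      ultimately show ?thesis
        by (meson ereal_less_eq(3) order.trans order.strict_implies_order)
    next
      case far: False
      show ?thesis
      proof (cases "h u")
        case (real s)
        define \<theta> where "\<theta> = \<rho> / norm (u - y)"
        have \<theta>: "0 \<le> \<theta>" "\<theta> \<le> 1" "\<theta> * norm (u - y) = \<rho>" "\<theta> > 0"
          using far \<open>\<rho> > 0\<close> by (auto simp: \<theta>_def divide_le_eq_1 zero_less_divide_iff)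
        have "norm (\<theta> *\<^sub>R u + (1 - \<theta>) *\<^sub>R y - y) = \<rho>"
          using \<theta> by (simp add: algebra_simps flip: scaleR_diff_right)
        then have "ereal (r - 1) < h (\<theta> *\<^sub>R u + (1 - \<theta>) *\<^sub>R y)"
          using \<open>\<rho> < d\<close> by (intro near) (simp add: dist_norm)
        also have "\<dots> \<le> ereal (\<theta> * s + (1 - \<theta>) * r)"
          using convex_funD_finite[OF h(2) \<theta>(1,2) real hy] .
        finally have "\<theta> * r - 1 < \<theta> * s"
          by (simp add: algebra_simps)
        then have "r - 1 / \<theta> < s"
          using \<open>\<theta> > 0\<close> by (simp add: field_simps)
        moreover have "1 / \<theta> = 1 / \<rho> * norm (u - y)"
          using far \<open>\<rho> > 0\<close> by (simp add: \<theta>_def)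
        ultimately show ?thesis
          using real by simp
      qed (use h(1) in \<open>simp_all add: proper_fun_def\<close>)
    qed
  qed
qed

section \<open>Ekeland's variational principle\<close>

definition ekeland_set :: "('a::metric_space \<Rightarrow> ereal) \<Rightarrow> real \<Rightarrow> 'a \<Rightarrow> 'a set" where
  "ekeland_set k e w = {y. k y + ereal (e * dist y w) \<le> k w}"

lemma ekeland_set_self: "w \<in> ekeland_set k e w"
  by (simp add: ekeland_set_def)

lemma ekeland_set_le:
  assumes "y \<in> ekeland_set k e w" "e \<ge> 0"
  shows "k y \<le> k w"
proof -
  have "k y + ereal 0 \<le> k y + ereal (e * dist y w)"
    using \<open>e \<ge> 0\<close> by (intro add_left_mono) simp
  also have "\<dots> \<le> k w"
    using assms(1) by (simp add: ekeland_set_def)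
  finally show ?thesis
    by simp
qed

lemma ekeland_set_subset:
  assumes "z \<in> ekeland_set k e w" "e \<ge> 0"
  shows "ekeland_set k e z \<subseteq> ekeland_set k e w"
proof
  fix y assume "y \<in> ekeland_set k e z"
  have "e * dist y w \<le> e * dist y z + e * dist z w"
    using \<open>e \<ge> 0\<close> dist_triangle[of y w z] by (simp add: mult_left_mono flip: distrib_left)
  then have "k y + ereal (e * dist y w) \<le> (k y + ereal (e * dist y z)) + ereal (e * dist z w)"
    by (simp add: add.assoc add_left_mono)
  also have "\<dots> \<le> k z + ereal (e * dist z w)"
    using \<open>y \<in> ekeland_set k e z\<close> by (simp add: ekeland_set_def add_right_mono)
  also have "\<dots> \<le> k w"
    using assms(1) by (simp add: ekeland_set_def)
  finally show "y \<in> ekeland_set k e w"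
    by (simp add: ekeland_set_def)
qed

lemma closed_ekeland_set:
  assumes "lsc_fun k"
  shows "closed (ekeland_set k e w)"
proof -
  have "lsc_fun (\<lambda>y. k y + ereal (e * dist y w))"
    using assms by (rule lsc_fun_add_continuous) (intro continuous_intros)
  then show ?thesis
    unfolding ekeland_set_def lsc_fun_def by blast
qed

text \<open>An almost minimiser of \<open>k\<close> on \<open>ekeland_set k e w\<close> has an Ekeland set of small radius.\<close>

lemma ekeland_step:
  assumes "k w \<noteq> \<infinity>" and bounded: "\<And>y. ereal b \<le> k y" and "e > 0" "\<epsilon> > 0"
  obtains w' where "w' \<in> ekeland_set k e w" "\<And>y. y \<in> ekeland_set k e w' \<Longrightarrow> dist y w' < \<epsilon>"
proof -
  define I where "I = (INF y\<in>ekeland_set k e w. k y)"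
  have "ereal b \<le> I"
    unfolding I_def using bounded by (rule INF_greatest)
  moreover have "I \<le> k w"
    unfolding I_def using ekeland_set_self by (rule INF_lower)
  ultimately obtain i where i: "I = ereal i"
    using \<open>k w \<noteq> \<infinity>\<close> by (cases I) auto
  then have "I < ereal (i + e * \<epsilon>)"
    using \<open>e > 0\<close> \<open>\<epsilon> > 0\<close> by simp
  then obtain w' where w': "w' \<in> ekeland_set k e w" "k w' < ereal (i + e * \<epsilon>)"
    unfolding I_def by (auto simp: INF_less_iff)
  show ?thesis
  proof (rule that[OF w'(1)])
    fix y assume y: "y \<in> ekeland_set k e w'"
    then have "y \<in> ekeland_set k e w"
      using ekeland_set_subset[OF w'(1)] \<open>e > 0\<close> by auto
    then have "ereal i \<le> k y"
      unfolding i[symmetric] I_def by (rule INF_lower)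
    moreover have "k y + ereal (e * dist y w') < ereal (i + e * \<epsilon>)"
      using y w'(2) unfolding ekeland_set_def by simp
    ultimately have "e * dist y w' < e * \<epsilon>"
      by (cases "k y") auto
    then show "dist y w' < \<epsilon>"
      using \<open>e > 0\<close> by simp
  qed
qed

lemma ekeland_sequence:
  assumes "k y0 \<noteq> \<infinity>" and bounded: "\<And>y. ereal b \<le> k y" and "e > 0"
  obtains zs where "zs 0 = y0" "\<And>n. zs (Suc n) \<in> ekeland_set k e (zs n)"
    "\<And>n y. y \<in> ekeland_set k e (zs (Suc n)) \<Longrightarrow> dist y (zs (Suc n)) < 1 / Suc n"
proof -
  let ?S = "ekeland_set k e"
  define next_point where "next_point n w =
    (SOME w'. w' \<in> ?S w \<and> (\<forall>y\<in>?S w'. dist y w' < 1 / Suc n))" for n w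
  have next_point: "next_point n w \<in> ?S w \<and> (\<forall>y\<in>?S (next_point n w). dist y (next_point n w) < 1 / Suc n)"
    if "k w \<noteq> \<infinity>" for n w
    unfolding next_point_def
    by (rule someI_ex, rule ekeland_step[of k w b e "1 / Suc n"]) (use that bounded \<open>e > 0\<close> in auto)
  define zs where "zs = rec_nat y0 next_point"
  have zs_Suc: "zs (Suc n) = next_point n (zs n)" for n
    by (simp add: zs_def)
  have finite: "k (zs n) \<noteq> \<infinity>" for n
  proof (induction n)
    case (Suc n)
    have "k (zs (Suc n)) \<le> k (zs n)"
      using next_point[OF Suc, of n] \<open>e > 0\<close> unfolding zs_Suc by (meson ekeland_set_le less_imp_le)
    then show ?case
      using Suc by auto
  qed (simp add: zs_def \<open>k y0 \<noteq> \<infinity>\<close>)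
  show ?thesis
    by (rule that[of zs]) (use next_point[OF finite] in \<open>simp_all add: zs_Suc zs_def\<close>)
qed

lemma ekeland_nest_singleton:
  fixes k :: "'a::complete_space \<Rightarrow> ereal"
  assumes "lsc_fun k" "e > 0" and step: "\<And>n. zs (Suc n) \<in> ekeland_set k e (zs n)"
    and small: "\<And>n y. y \<in> ekeland_set k e (zs (Suc n)) \<Longrightarrow> dist y (zs (Suc n)) < 1 / Suc n"
  obtains z where "(\<Inter>n. ekeland_set k e (zs n)) = {z}"
proof -
  define T where "T n = ekeland_set k e (zs n)" for n
  have "\<exists>z. \<Inter>(range T) = {z}"
  proof (rule decreasing_closed_nest_sing)
    show "closed (T n)" for n
      unfolding T_def using \<open>lsc_fun k\<close> by (rule closed_ekeland_set)
    show "T n \<noteq> {}" for n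
      unfolding T_def using ekeland_set_self by blast
    show "T n \<subseteq> T m" if "m \<le> n" for m n
      using that
    proof (induction rule: dec_induct)
      case (step n)
      then show ?case
        using ekeland_set_subset[OF assms(3)[of n]] \<open>e > 0\<close> by (auto simp: T_def)
    qed simp
    show "\<exists>n. \<forall>x\<in>T n. \<forall>y\<in>T n. dist x y < \<epsilon>" if "\<epsilon> > 0" for \<epsilon>
    proof -
      obtain n where n: "1 / Suc n < \<epsilon> / 2"
        using nat_approx_posE[of "\<epsilon> / 2"] \<open>\<epsilon> > 0\<close> by auto
      have "dist x y < \<epsilon>" if "x \<in> T (Suc n)" "y \<in> T (Suc n)" for x y
        using dist_triangle2[of x y "zs (Suc n)"] small[of x n] small[of y n] that n
        by (simp add: T_def)
      then show ?thesis
        by blast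
    qed
  qed
  then show ?thesis
    using that unfolding T_def by blast
qed

theorem ekeland_variational_principle:
  fixes k :: "'a::complete_space \<Rightarrow> ereal"
  assumes "lsc_fun k" and "k y0 = ereal r0" and almost_min: "\<And>y. ereal (r0 - \<delta>) \<le> k y"
    and "\<delta> > 0" "\<rho> > 0"
  obtains z where "dist z y0 \<le> \<rho>" "k z \<noteq> \<infinity>" "\<And>y. k z \<le> k y + ereal (\<delta> / \<rho> * dist y z)"
proof -
  define e where "e = \<delta> / \<rho>"
  have "e > 0"
    using \<open>\<delta> > 0\<close> \<open>\<rho> > 0\<close> by (simp add: e_def)
  obtain zs where zs: "zs 0 = y0" "\<And>n. zs (Suc n) \<in> ekeland_set k e (zs n)"
    "\<And>n y. y \<in> ekeland_set k e (zs (Suc n)) \<Longrightarrow> dist y (zs (Suc n)) < 1 / Suc n"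
    using ekeland_sequence[of k y0 "r0 - \<delta>" e] \<open>k y0 = ereal r0\<close> almost_min \<open>e > 0\<close> by auto
  obtain z where z: "(\<Inter>n. ekeland_set k e (zs n)) = {z}"
    using ekeland_nest_singleton[OF \<open>lsc_fun k\<close> \<open>e > 0\<close> zs(2,3)] by blast
  show ?thesis
  proof (rule that)
    have "z \<in> ekeland_set k e y0"
      using z zs(1) by blast
    then have "k z + ereal (e * dist z y0) \<le> ereal r0"
      using \<open>k y0 = ereal r0\<close> by (simp add: ekeland_set_def)
    then have "e * dist z y0 \<le> \<delta>" "k z \<noteq> \<infinity>"
      using almost_min[of z] by (cases "k z"; simp)+
    then show "dist z y0 \<le> \<rho>" "k z \<noteq> \<infinity>"
      using \<open>\<rho> > 0\<close> \<open>\<delta> > 0\<close> by (simp_all add: e_def field_simps)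
  next
    fix y
    show "k z \<le> k y + ereal (\<delta> / \<rho> * dist y z)"
    proof (rule ccontr)
      assume less: "\<not> ?thesis"
      then have "y \<in> ekeland_set k e z"
        by (simp add: ekeland_set_def e_def)
      moreover have "z \<in> ekeland_set k e (zs n)" for n
        using z by blast
      ultimately have "y \<in> (\<Inter>n. ekeland_set k e (zs n))"
        using ekeland_set_subset \<open>e > 0\<close> by (blast dest: less_imp_le)
      then show False
        using z less by simp
    qed
  qed
qed

section \<open>The Br{\o}ndsted--Rockafellar theorem\<close>

lemma
  fixes h :: "'a::real_normed_vector \<Rightarrow> ereal" and L :: "'a \<Rightarrow>\<^sub>L real"
  assumes "proper_fun h" "convex_fun h" "lsc_fun h"
  shows proper_fun_shift_tilt: "proper_fun (\<lambda>u. h (u + x) - ereal (L u))"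
    and convex_fun_shift_tilt: "convex_fun (\<lambda>u. h (u + x) - ereal (L u))"
    and lsc_fun_shift_tilt: "lsc_fun (\<lambda>u. h (u + x) - ereal (L u))"
proof -
  obtain y where "h y \<noteq> \<infinity>"
    using assms(1) unfolding proper_fun_def by blast
  then have "h ((y - x) + x) - ereal (L (y - x)) \<noteq> \<infinity>"
    by (cases "h y") auto
  moreover have "h (u + x) - ereal (L u) \<noteq> -\<infinity>" for u
    using assms(1) by (cases "h (u + x)") (auto simp: proper_fun_def)
  ultimately show "proper_fun (\<lambda>u. h (u + x) - ereal (L u))"
    unfolding proper_fun_def by blast
  have "proper_fun (\<lambda>u. h (u + x))"
    using assms(1) unfolding proper_fun_def by (metis diff_add_cancel)
  then show "convex_fun (\<lambda>u. h (u + x) - ereal (L u))"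
    using convex_fun_translate[OF assms(2)] bounded_linear.linear[OF blinfun.bounded_linear_right]
    by (rule convex_fun_diff_linear)
  have "lsc_fun (\<lambda>u. h (u + x) + ereal (- L u))"
    using lsc_fun_translate[OF assms(3)] by (rule lsc_fun_add_continuous) (intro continuous_intros)
  then show "lsc_fun (\<lambda>u. h (u + x) - ereal (L u))"
    by (simp add: minus_ereal_def)
qed

lemma subdiff_shift_tilt:
  fixes h :: "'a::real_normed_vector \<Rightarrow> ereal" and L :: "'a \<Rightarrow>\<^sub>L real"
  shows "zs \<in> subdiff (\<lambda>u. h (u + x) - ereal (L u)) b \<longleftrightarrow> zs + L \<in> subdiff h (b + x)"
proof -
  let ?sub = "\<lambda>w. h (b + x) + ereal (pair (w - (b + x)) (zs + L)) \<le> h w"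
  have "h (b + x) - ereal (L b) < \<infinity> \<longleftrightarrow> h (b + x) < \<infinity>"
    by (cases "h (b + x)") auto
  moreover have "h (b + x) - ereal (L b) + ereal (pair (y - b) zs) \<le> h (y + x) - ereal (L y)
      \<longleftrightarrow> ?sub (y + x)" for y
    by (cases "h (b + x)"; cases "h (y + x)")
      (auto simp: pair_def blinfun.add_left blinfun.diff_right algebra_simps)
  moreover have "(\<forall>y. ?sub (y + x)) \<longleftrightarrow> (\<forall>w. ?sub w)"
    by (metis diff_add_cancel)
  ultimately show ?thesis
    unfolding subdiff_def mem_Collect_eq by presburger
qed

theorem brondsted_rockafellar:
  fixes h :: "'a::banach \<Rightarrow> ereal" and cs :: "'a \<Rightarrow>\<^sub>L real"
  assumes h: "proper_fun h" "convex_fun h" "lsc_fun h" and "h y0 = ereal r0"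
    and eps_subgradient: "\<And>y. h y0 + ereal (cs (y - y0)) - ereal \<delta> \<le> h y"
    and "\<delta> > 0" "\<rho> > 0"
  obtains z zs where "zs \<in> subdiff h z" "norm (z - y0) \<le> \<rho>" "norm (zs - cs) \<le> \<delta> / \<rho>"
proof -
  define k where "k u = h u - ereal (cs u)" for u
  have k: "proper_fun k" "convex_fun k" "lsc_fun k"
    using proper_fun_shift_tilt[OF h, of 0 cs] convex_fun_shift_tilt[OF h, of 0 cs]
      lsc_fun_shift_tilt[OF h, of 0 cs]
    by (simp_all add: k_def[abs_def])
  have k_y0: "k y0 = ereal (r0 - cs y0)"
    using \<open>h y0 = ereal r0\<close> by (simp add: k_def)
  have "ereal (r0 - cs y0 - \<delta>) \<le> k y" for y
    using eps_subgradient[of y] \<open>h y0 = ereal r0\<close>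
    by (cases "h y") (auto simp: k_def blinfun.diff_right)
  then obtain z where z: "dist z y0 \<le> \<rho>" "k z \<noteq> \<infinity>"
    and ekeland: "\<And>y. k z \<le> k y + ereal (\<delta> / \<rho> * dist y z)"
    using ekeland_variational_principle[OF k(3) k_y0 _ \<open>\<delta> > 0\<close> \<open>\<rho> > 0\<close>] by auto
  obtain kz where kz: "k z = ereal kz"
    using z(2) k(1) by (cases "k z") (auto simp: proper_fun_def)
  have cone: "ereal (kz - \<delta> / \<rho> * norm (u - z)) \<le> k u" for u
    using ekeland[of u] kz by (cases "k u") (auto simp: dist_norm)
  have "\<delta> / \<rho> \<ge> 0"
    using \<open>\<delta> > 0\<close> \<open>\<rho> > 0\<close> by simp
  then obtain L :: "'a \<Rightarrow>\<^sub>L real" and \<beta> where L: "\<And>u. ereal (L u + \<beta>) \<le> k u"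
    "\<And>u. kz - \<delta> / \<rho> * norm (u - z) \<le> L u + \<beta>" "norm L \<le> \<delta> / \<rho>"
    using affine_between_cone_and_convex[OF k(1,2) _ cone] by blast
  have "L z + \<beta> = kz"
    using L(1)[of z] L(2)[of z] kz by simp
  then have "L \<in> subdiff k z"
    using L(1) kz by (auto simp: subdiff_def pair_def blinfun.diff_right add.commute)
  then have "L + cs \<in> subdiff h z"
    using subdiff_shift_tilt[of L h 0 cs z] unfolding k_def[abs_def] by simp
  moreover have "norm (L + cs - cs) \<le> \<delta> / \<rho>"
    using L(3) by simp
  ultimately show ?thesis
    using that z(1) by (simp add: dist_norm)
qed

section \<open>Subgradients with small pairing\<close>

lemma coercive_approx_minimiser:
  fixes h :: "'a::real_normed_vector \<Rightarrow> ereal"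
  assumes h: "proper_fun h" and coercive: "\<And>u. ereal (b - \<mu> * norm u) \<le> h u" and "\<delta> > 0"
  obtains y0 r0 where "h y0 = ereal r0" "\<And>u. ereal (r0 + \<mu> * norm y0 - \<delta> - \<mu> * norm u) \<le> h u"
proof -
  define m where "m = (INF u. h u + ereal (\<mu> * norm u))"
  obtain y1 where "h y1 \<noteq> \<infinity>"
    using h unfolding proper_fun_def by blast
  moreover have "m \<le> h y1 + ereal (\<mu> * norm y1)"
    unfolding m_def by (rule INF_lower) simp
  ultimately have "m < \<infinity>"
    by (cases "h y1") auto
  moreover have "ereal b \<le> m"
    unfolding m_def
  proof (rule INF_greatest)
    fix u
    show "ereal b \<le> h u + ereal (\<mu> * norm u)"
      using coercive[of u] by (cases "h u") auto
  qed
  ultimately obtain mr where mr: "m = ereal mr"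
    by (cases m) auto
  then have "m < ereal (mr + \<delta>)"
    using \<open>\<delta> > 0\<close> by simp
  then obtain y0 where "h y0 + ereal (\<mu> * norm y0) < ereal (mr + \<delta>)"
    unfolding m_def by (auto simp: INF_less_iff)
  moreover have "h y0 \<noteq> -\<infinity>"
    using h by (simp add: proper_fun_def)
  ultimately obtain r0 where r0: "h y0 = ereal r0" "r0 + \<mu> * norm y0 < mr + \<delta>"
    by (cases "h y0") auto
  show ?thesis
  proof (rule that[OF r0(1)])
    fix u
    have "ereal mr \<le> h u + ereal (\<mu> * norm u)"
      unfolding mr[symmetric] m_def by (rule INF_lower) simp
    then show "ereal (r0 + \<mu> * norm y0 - \<delta> - \<mu> * norm u) \<le> h u"
      using r0(2) by (cases "h u") auto
  qed
qed

lemma exists_small_eps_subgradient: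
  fixes h :: "'a::real_normed_vector \<Rightarrow> ereal"
  assumes h: "proper_fun h" "convex_fun h" and coercive: "\<And>u. ereal (b - \<mu> * norm u) \<le> h u"
    and "\<mu> \<ge> 0" "\<delta> > 0"
  obtains y0 r0 and cs :: "'a \<Rightarrow>\<^sub>L real"
  where "h y0 = ereal r0" "\<And>y. h y0 + ereal (cs (y - y0)) - ereal \<delta> \<le> h y"
    "norm cs \<le> \<mu>" "cs y0 + \<mu> * norm y0 \<le> \<delta>"
proof -
  obtain y0 r0 where r0: "h y0 = ereal r0"
    and cone: "\<And>u. ereal (r0 + \<mu> * norm y0 - \<delta> - \<mu> * norm u) \<le> h u"
    using coercive_approx_minimiser[OF h(1) coercive \<open>\<delta> > 0\<close>] by blast
  define c where "c = r0 + \<mu> * norm y0 - \<delta>"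
  have "ereal (c - \<mu> * norm (u - 0)) \<le> h u" for u
    using cone[of u] by (simp add: c_def)
  then obtain cs :: "'a \<Rightarrow>\<^sub>L real" and \<beta> where cs: "\<And>u. ereal (cs u + \<beta>) \<le> h u"
    "\<And>u. c - \<mu> * norm (u - 0) \<le> cs u + \<beta>" "norm cs \<le> \<mu>"
    using affine_between_cone_and_convex[OF h \<open>\<mu> \<ge> 0\<close>] by blast
  have "c \<le> \<beta>" "cs y0 + \<beta> \<le> r0"
    using cs(1)[of y0] cs(2)[of 0] r0(1) by simp_all
  then have cs_y0: "cs y0 + \<mu> * norm y0 \<le> \<delta>"
    by (simp add: c_def)
  have "- (\<mu> * norm y0) \<le> cs y0"
    using norm_blinfun[of cs y0] mult_right_mono[OF cs(3) norm_ge_zero[of y0]] by (simp add: abs_le_iff)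
  then have "ereal (r0 + cs (y - y0) - \<delta>) \<le> ereal (cs y + \<beta>)" for y
    using \<open>c \<le> \<beta>\<close> by (simp add: c_def blinfun.diff_right)
  then have "h y0 + ereal (cs (y - y0)) - ereal \<delta> \<le> h y" for y
    using order_trans[OF _ cs(1)[of y]] r0(1) by simp
  then show ?thesis
    using that r0(1) cs(3) cs_y0 by blast
qed

lemma proper_convex_lsc_coercive:
  fixes h :: "'a::real_normed_vector \<Rightarrow> ereal"
  assumes h: "proper_fun h" "convex_fun h" "lsc_fun h"
  obtains b \<mu> where "\<mu> > 0" "\<And>u. ereal (b - \<mu> * norm u) \<le> h u"
proof -
  obtain y r where "h y = ereal r"
    using h(1) unfolding proper_fun_def by (metis ereal_cases)
  then obtain m where "m \<ge> 0" and cone: "\<And>u. ereal (r - 1 - m * norm (u - y)) \<le> h u"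
    using lsc_convex_cone_minorant[OF h] by blast
  show ?thesis
  proof (rule that[of "m + 1" "r - 1 - m * norm y"])
    show "m + 1 > 0"
      using \<open>m \<ge> 0\<close> by simp
    fix u
    have "m * norm (u - y) \<le> m * norm u + m * norm y"
      using \<open>m \<ge> 0\<close> norm_triangle_ineq4[of u y] by (simp add: mult_left_mono flip: distrib_left)
    then have "r - 1 - m * norm y - (m + 1) * norm u \<le> r - 1 - m * norm (u - y)"
      by (simp add: algebra_simps) (use norm_ge_zero[of u] in linarith)
    then show "ereal (r - 1 - m * norm y - (m + 1) * norm u) \<le> h u"
      using cone[of u] by (meson ereal_less_eq(3) order_trans)
  qed
qed

text \<open>Rockafellar's argument: Br{\o}ndsted--Rockafellar moves the \<open>\<delta>\<close>-subgradient of
  \<open>exists_small_eps_subgradient\<close> to an exact one, changing the pairing by \<open>O(\<delta> + \<mu> \<rho>)\<close>.\<close>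

lemma exists_subgradient_small_pairing:
  fixes h :: "'a::banach \<Rightarrow> ereal"
  assumes h: "proper_fun h" "convex_fun h" "lsc_fun h" and "\<eta> > 0"
  obtains b bs where "bs \<in> subdiff h b" "bs b \<le> \<eta>"
proof -
  obtain b \<mu> where "\<mu> > 0" and coercive: "\<And>u. ereal (b - \<mu> * norm u) \<le> h u"
    using proper_convex_lsc_coercive[OF h] by blast
  define \<rho> where "\<rho> = \<eta> / (2 * \<mu>)"
  define \<delta> where "\<delta> = min (\<eta> / 4) (\<mu> * \<rho>)"
  have "\<rho> > 0" "\<mu> * \<rho> = \<eta> / 2" "\<delta> > 0" "\<delta> \<le> \<eta> / 4" "\<delta> / \<rho> \<le> \<mu>"
    using \<open>\<mu> > 0\<close> \<open>\<eta> > 0\<close> by (auto simp: \<rho>_def \<delta>_def field_simps min_def)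
  obtain y0 r0 and cs :: "'a \<Rightarrow>\<^sub>L real" where y0: "h y0 = ereal r0"
    and cs: "\<And>y. h y0 + ereal (cs (y - y0)) - ereal \<delta> \<le> h y" "norm cs \<le> \<mu>"
    and cs_y0: "cs y0 + \<mu> * norm y0 \<le> \<delta>"
    using exists_small_eps_subgradient[OF h(1,2) coercive less_imp_le[OF \<open>\<mu> > 0\<close>] \<open>\<delta> > 0\<close>]
    by blast
  obtain z zs where z: "zs \<in> subdiff h z" "norm (z - y0) \<le> \<rho>" "norm (zs - cs) \<le> \<delta> / \<rho>"
    using brondsted_rockafellar[OF h y0 cs(1) \<open>\<delta> > 0\<close> \<open>\<rho> > 0\<close>] by blast
  have "cs (z - y0) \<le> \<mu> * \<rho>"
    using norm_blinfun[of cs "z - y0"] mult_mono[OF cs(2) z(2)] \<open>\<mu> > 0\<close> by (simp add: abs_le_iff)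
  moreover have "(zs - cs) z \<le> \<mu> * norm y0 + \<delta>"
  proof -
    have "norm z \<le> norm y0 + \<rho>"
      using norm_triangle_ineq[of "z - y0" y0] z(2) by simp
    have "(zs - cs) z \<le> norm (zs - cs) * norm z"
      using norm_blinfun[of "zs - cs" z] by (simp add: abs_le_iff)
    also have "\<dots> \<le> \<delta> / \<rho> * (norm y0 + \<rho>)"
      using z(3) \<open>norm z \<le> norm y0 + \<rho>\<close> \<open>\<delta> > 0\<close> \<open>\<rho> > 0\<close> by (intro mult_mono) auto
    also have "\<dots> \<le> \<mu> * norm y0 + \<delta>"
      using mult_right_mono[OF \<open>\<delta> / \<rho> \<le> \<mu>\<close> norm_ge_zero[of y0]] \<open>\<rho> > 0\<close>
      by (simp add: distrib_left)
    finally show ?thesis .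
  qed
  moreover have "zs z = cs y0 + cs (z - y0) + (zs - cs) z"
    by (simp add: blinfun.diff_left blinfun.diff_right)
  ultimately have "zs z \<le> \<eta>"
    using cs_y0 \<open>\<mu> * \<rho> = \<eta> / 2\<close> \<open>\<delta> \<le> \<eta> / 4\<close> by linarith
  then show ?thesis
    using that z(1) by blast
qed

section \<open>The Fitzpatrick function of a subdifferential\<close>

lemma fitzpatrick_subdiff_ge_pair:
  fixes f :: "'a::banach \<Rightarrow> ereal"
  assumes f: "proper_fun f" "convex_fun f" "lsc_fun f"
  shows "ereal (pair x xs) \<le> fitzpatrick (subdiff f) (x, xs)"
proof (rule ereal_le_epsilon2)
  fix e :: real assume "e > 0"
  let ?h = "\<lambda>u. f (u + x) - ereal (xs u)"
  obtain b bs where "bs \<in> subdiff ?h b" "bs b \<le> e"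
    using exists_subgradient_small_pairing[OF proper_fun_shift_tilt[OF f] convex_fun_shift_tilt[OF f]
        lsc_fun_shift_tilt[OF f] \<open>e > 0\<close>] by blast
  then have "bs + xs \<in> subdiff f (b + x)"
    by (simp add: subdiff_shift_tilt)
  then have "ereal (pair (b + x) xs + pair (x - (b + x)) (bs + xs)) \<le> fitzpatrick (subdiff f) (x, xs)"
    unfolding fitzpatrick_def by (auto intro: SUP_upper2)
  moreover have "pair x xs \<le> pair (b + x) xs + pair (x - (b + x)) (bs + xs) + e"
    using \<open>bs b \<le> e\<close> by (simp add: pair_def blinfun.add_left blinfun.add_right blinfun.minus_right)
  ultimately show "ereal (pair x xs) \<le> fitzpatrick (subdiff f) (x, xs) + ereal e"
    by (metis add_right_mono ereal_less_eq(3) order_trans plus_ereal.simps(1))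
qed

lemma conj_pair_le_of_breve_T:
  assumes "xs \<in> breve_T g \<delta> x" and "ereal (pair x xs) \<le> g (x, xs)"
  shows "conj_pair g (xs, x) \<le> ereal (pair x xs + 2 * \<delta>)"
  unfolding conj_pair_def prod.case
proof (rule SUP_least)
  fix p :: "'a \<times> ('a \<Rightarrow>\<^sub>L real)"
  obtain y ys where p: "p = (y, ys)"
    by (cases p)
  have "g (x, xs) + ereal (pair2 (p - (x, xs)) (xs, x)) - ereal (2 * \<delta>) \<le> g p"
    using assms(1) by (auto simp: breve_T_def eps_subdiff_def p split: if_splits)
  then have "ereal (pair x xs) + ereal (pair2 (p - (x, xs)) (xs, x)) - ereal (2 * \<delta>) \<le> g p"
    using assms(2) by (meson add_right_mono ereal_minus_mono order_refl order_trans)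
  then have "ereal (pair y xs + pair x ys - pair x xs - 2 * \<delta>) \<le> g p"
    by (simp add: p pair2_def pair_def blinfun.diff_right blinfun.diff_left algebra_simps)
  then show "ereal (pair (fst p) xs + pair x (snd p)) - g p \<le> ereal (pair x xs + 2 * \<delta>)"
    by (cases "g p") (auto simp: p)
qed

theorem proposition4p1:
  fixes f :: "'a::banach \<Rightarrow> ereal"
  assumes "reflexive_space TYPE('a)"
    and "lsc_fun f" and "proper_fun f" and "convex_fun f"
  shows "\<forall>\<epsilon> x. \<epsilon> \<ge> 0 \<longrightarrow>
           breve_T (fitzpatrick (subdiff f)) (\<epsilon> / 2) x \<subseteq> smallest_enl (subdiff f) \<epsilon> x"
proof (intro allI impI subsetI)
  fix \<epsilon> :: real and x xs
  assume "xs \<in> breve_T (fitzpatrick (subdiff f)) (\<epsilon> / 2) x"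
  moreover have "ereal (pair x xs) \<le> fitzpatrick (subdiff f) (x, xs)"
    using assms(2-4) by (intro fitzpatrick_subdiff_ge_pair)
  ultimately have "conj_pair (fitzpatrick (subdiff f)) (xs, x) \<le> ereal (pair x xs + \<epsilon>)"
    using conj_pair_le_of_breve_T by fastforce
  then show "xs \<in> smallest_enl (subdiff f) \<epsilon> x"
    by (simp add: smallest_enl_def)
qed

end
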